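(* Let $n\ge2$ and let $M\in\mathbb{R}^{n\times n}$ be Metzler, output unstable and nonsingular. Then (a) $S^TM^{-1}e_n\ge0$ and $e_n^TM^{-1}S\ge0$ entrywise, and $e_n^TM^{-1}e_n>0$; (b) for every $b_0\in\mathbb{R}^n_{\ge0}$, $g_0:=-e_n^TM^{-1}b_0\le0$, and $g_n:=-e_n^TM^{-1}e_n<0$.
   Context: $S:=[e_1\ \cdots\ e_{n-1}]\in\mathbb{R}^{n\times(n-1)}$, with $e_i$ the standard basis vectors. Metzler: all off-diagonal entries nonnegative. Hurwitz stable: all eigenvalues have negative real part. A matrix $M\in\mathbb{R}^{n\times n}$ is output unstable if $S^TMS$ is Hurwitz stable and $e_n^TMe_n>0$. *)

theory Defs
  imports "Jordan_Normal_Form.Matrix" "Jordan_Normal_Form.Char_Poly" Complex_Main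
begin

definition S_mat :: "nat \<Rightarrow> real mat" where
  "S_mat n = mat n (n - 1) (\<lambda>(i, j). if i = j then 1 else 0)"

definition en_col :: "nat \<Rightarrow> real mat" where
  "en_col n = mat n 1 (\<lambda>(i, j). if i = n - 1 then 1 else 0)"

definition metzler :: "real mat \<Rightarrow> bool" where
  "metzler M \<longleftrightarrow> (\<forall>i < dim_row M. \<forall>j < dim_col M. i \<noteq> j \<longrightarrow> M $$ (i, j) \<ge> 0)"

definition hurwitz :: "real mat \<Rightarrow> bool" where
  "hurwitz A \<longleftrightarrow> square_mat A \<and>
     (\<forall>z. eigenvalue (map_mat complex_of_real A) z \<longrightarrow> Re z < 0)"

definition output_unstable :: "real mat \<Rightarrow> bool" where
  "output_unstable M \<longleftrightarrow>
     (let n = dim_row M in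
       hurwitz (transpose_mat (S_mat n) * M * S_mat n) \<and>
       (transpose_mat (en_col n) * M * en_col n) $$ (0, 0) > 0)"

definition nonneg_mat :: "real mat \<Rightarrow> bool" where
  "nonneg_mat A \<longleftrightarrow> (\<forall>i < dim_row A. \<forall>j < dim_col A. A $$ (i, j) \<ge> 0)"

end

theory Submission
  imports Defs "Jordan_Normal_Form.Spectral_Radius"
begin

text \<open>Write \<open>M\<close> in block form with leading block \<open>A = S\<^sup>T M S\<close>, border columns
  \<open>b = S\<^sup>T M e\<^sub>n\<close>, \<open>c = e\<^sub>n\<^sup>T M S\<close> and corner \<open>d = e\<^sub>n\<^sup>T M e\<^sub>n > 0\<close>.
  The block \<open>A\<close> is Metzler and Hurwitz, hence \<open>Q = -A\<^sup>-\<^sup>1 \<ge> 0\<close>: for large \<open>c\<^sub>0\<close> the matrix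
  \<open>C = I + A/c\<^sub>0\<close> is nonnegative with spectrum in the open unit disc, so \<open>C\<^sup>k \<rightarrow> 0\<close>, while
  \<open>Q - C Q = I/c\<^sub>0 \<ge> 0\<close> gives \<open>Q \<ge> C\<^sup>k Q \<rightarrow> 0\<close>.
  Solving \<open>M M\<^sup>-\<^sup>1 = I\<close> blockwise, the last column of \<open>M\<^sup>-\<^sup>1\<close> above the corner is \<open>w Q b\<close>
  and its last row left of the corner is \<open>w c Q\<close>, where the corner \<open>w\<close> satisfies
  \<open>w (c Q b + d) = 1\<close>. Since \<open>b, c \<ge> 0\<close> consist of off-diagonal entries of \<open>M\<close>, we get
  \<open>w > 0\<close> and a nonnegative last row and column; part (b) follows from the last row.\<close>

lemma pow_mat_smult:
  fixes A :: "'a :: comm_semiring_1 mat"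
  assumes A: "A \<in> carrier_mat n n"
  shows "(c \<cdot>\<^sub>m A) ^\<^sub>m k = c ^ k \<cdot>\<^sub>m A ^\<^sub>m k"
proof (induction k)
  case 0
  show ?case using A by (intro eq_matI) auto
next
  case (Suc k)
  have "(c \<cdot>\<^sub>m A) ^\<^sub>m Suc k = (c ^ k \<cdot>\<^sub>m A ^\<^sub>m k) * (c \<cdot>\<^sub>m A)"
    by (simp add: Suc.IH)
  also have "\<dots> = c \<cdot>\<^sub>m (c ^ k \<cdot>\<^sub>m A ^\<^sub>m Suc k)"
    using A by (simp add: mult_smult_assoc_mat[of _ n n] mult_smult_distrib[of _ n n])
  also have "\<dots> = c ^ Suc k \<cdot>\<^sub>m A ^\<^sub>m Suc k"
    by (intro eq_matI) (auto simp: mult.assoc)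
  finally show ?case .
qed

lemma index_mult_mat_sum:
  assumes "A \<in> carrier_mat k n" "B \<in> carrier_mat n l" "i < k" "j < l"
  shows "(A * B) $$ (i, j) = (\<Sum>p<n. A $$ (i, p) * B $$ (p, j))"
  using assms by (simp add: scalar_prod_def atLeast0LessThan)

lemma index_mult_1x1:
  "A \<in> carrier_mat 1 1 \<Longrightarrow> B \<in> carrier_mat 1 1 \<Longrightarrow> (A * B) $$ (0, 0) = A $$ (0, 0) * B $$ (0, 0)"
  by (simp add: scalar_prod_def)

lemma uminus_add_eq_zero_imp_eq:
  fixes X Y :: "'a :: ab_group_add mat"
  assumes X: "X \<in> carrier_mat k l" and Y: "Y \<in> carrier_mat k l" and eq: "0\<^sub>m k l = - Y + X"
  shows "Y = X"
proof (rule eq_matI)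
  fix i j assume "i < dim_row X" "j < dim_col X"
  then have "i < k" "j < l" using X by auto
  moreover have "0\<^sub>m k l $$ (i, j) = (- Y + X) $$ (i, j)" using eq by simp
  ultimately show "Y $$ (i, j) = X $$ (i, j)" using X Y by simp
qed (use X Y in auto)

lemma eigenvalue_smult_add_diag_iff:
  fixes A :: "'a :: field mat"
  assumes A: "A \<in> carrier_mat n n" and a: "a \<noteq> 0"
  shows "eigenvalue (a \<cdot>\<^sub>m A + b \<cdot>\<^sub>m 1\<^sub>m n) \<mu> \<longleftrightarrow> eigenvalue A ((\<mu> - b) / a)"
proof -
  have "char_matrix (a \<cdot>\<^sub>m A + b \<cdot>\<^sub>m 1\<^sub>m n) \<mu> = a \<cdot>\<^sub>m char_matrix A ((\<mu> - b) / a)"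
    using A a by (intro eq_matI) (auto simp: char_matrix_def field_simps)
  then show ?thesis
    using A a by (simp add: eigenvalue_det[of _ n])
qed

lemma pow_mat_tendsto_zero:
  fixes A :: "complex mat"
  assumes A: "A \<in> carrier_mat n n" and ev: "\<And>\<mu>. eigenvalue A \<mu> \<Longrightarrow> cmod \<mu> < 1"
    and i: "i < n" and j: "j < n"
  shows "(\<lambda>k. (A ^\<^sub>m k) $$ (i, j)) \<longlonglongrightarrow> 0"
proof -
  have n: "n > 0" using i by simp
  define \<rho> where "\<rho> = spectral_radius A"
  have "\<rho> \<in> norm ` spectrum A" unfolding \<rho>_def by (rule spectral_radius_mem_max(1)[OF A n])
  then have \<rho>: "0 \<le> \<rho>" "\<rho> < 1" using ev unfolding spectrum_def by auto
  \<comment> \<open>For \<open>\<rho>(A) < r < 1\<close> the JNF bound on the powers of \<open>A/r\<close>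
    yields \<open>|(A\<^sup>k)\<^sub>i\<^sub>j| \<le> K r\<^sup>k\<close>.\<close>
  define r where "r = (1 + \<rho>) / 2"
  have r: "0 < r" "r < 1" "\<rho> < r" using \<rho> unfolding r_def by auto
  define B where "B = (1 / complex_of_real r) \<cdot>\<^sub>m A"
  have B: "B \<in> carrier_mat n n" unfolding B_def using A by simp
  have "cmod \<mu> < 1" if "eigenvalue B \<mu>" for \<mu>
  proof -
    have "B = (1 / complex_of_real r) \<cdot>\<^sub>m A + 0 \<cdot>\<^sub>m 1\<^sub>m n"
      unfolding B_def using A by (intro eq_matI) auto
    with that have "eigenvalue A (complex_of_real r * \<mu>)"
      using eigenvalue_smult_add_diag_iff[OF A, of "1 / complex_of_real r"] r by (simp add: mult.commute)
    then have "cmod (complex_of_real r * \<mu>) \<le> \<rho>"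
      using spectral_radius_mem_max(2)[OF A n] unfolding \<rho>_def spectrum_def by auto
    then have "r * cmod \<mu> \<le> \<rho>"
      using r(1) by (simp add: norm_mult)
    then show ?thesis
      using r mult_less_cancel_left_pos[of r "cmod \<mu>" 1] by linarith
  qed
  then have "spectral_radius B < 1"
    using spectral_radius_mem_max(1)[OF B n] unfolding spectrum_def by auto
  then obtain K where K: "\<And>k. norm_bound (B ^\<^sub>m k) K"
    using spectral_radius_jnf_norm_bound_less_1_upper_triangular[OF B] by blast
  have "A = complex_of_real r \<cdot>\<^sub>m B"
    unfolding B_def using A r by (intro eq_matI) auto
  then have "A ^\<^sub>m k = complex_of_real r ^ k \<cdot>\<^sub>m B ^\<^sub>m k" for k
    using pow_mat_smult[OF B] by simp
  then have "norm ((A ^\<^sub>m k) $$ (i, j)) = norm (r ^ k) * norm ((B ^\<^sub>m k) $$ (i, j))" for k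
    using B i j by (simp add: norm_mult norm_power power_abs)
  also have "\<dots> k \<le> norm (r ^ k) * K" for k
    using K[of k] B i j unfolding norm_bound_def by (simp add: mult_left_mono)
  finally have "\<forall>\<^sub>F k in sequentially. norm ((A ^\<^sub>m k) $$ (i, j)) \<le> norm (r ^ k) * K"
    by simp
  moreover have "(\<lambda>k. r ^ k) \<longlonglongrightarrow> 0"
    using r by (intro LIMSEQ_power_zero) auto
  ultimately show ?thesis
    by (rule tendsto_0_le[rotated])
qed

section \<open>Nonnegative matrices\<close>

lemma nonneg_matD: "nonneg_mat A \<Longrightarrow> i < dim_row A \<Longrightarrow> j < dim_col A \<Longrightarrow> 0 \<le> A $$ (i, j)"
  unfolding nonneg_mat_def by blast

lemma nonneg_mat_1x1_iff: "A \<in> carrier_mat 1 1 \<Longrightarrow> nonneg_mat A \<longleftrightarrow> 0 \<le> A $$ (0, 0)"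
  unfolding nonneg_mat_def by auto

lemma nonneg_mat_mult:
  assumes "A \<in> carrier_mat k n" "B \<in> carrier_mat n l" "nonneg_mat A" "nonneg_mat B"
  shows "nonneg_mat (A * B)"
  using assms unfolding nonneg_mat_def
  by (auto simp: scalar_prod_def intro!: sum_nonneg mult_nonneg_nonneg)

lemma nonneg_mat_pow:
  assumes A: "A \<in> carrier_mat n n" and "nonneg_mat A"
  shows "nonneg_mat (A ^\<^sub>m k)"
proof (induction k)
  case 0
  show ?case unfolding nonneg_mat_def by simp
next
  case (Suc k)
  then show ?case using A assms(2) by (simp add: nonneg_mat_mult[of _ n n])
qed

lemma nonneg_mat_of_pow_tendsto_zero:
  assumes C: "C \<in> carrier_mat m m" and "nonneg_mat C"
    and lim: "\<And>i j. i < m \<Longrightarrow> j < m \<Longrightarrow> (\<lambda>k. (C ^\<^sub>m k) $$ (i, j)) \<longlonglongrightarrow> 0"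
    and Q: "Q \<in> carrier_mat m p" and dom: "nonneg_mat (Q - C * Q)"
  shows "nonneg_mat Q"
proof -
  have dec: "nonneg_mat (Q - C ^\<^sub>m k * Q)" for k
  proof (induction k)
    case 0
    show ?case using C Q unfolding nonneg_mat_def by simp
  next
    case (Suc k)
    have "C ^\<^sub>m Suc k * Q = C ^\<^sub>m k * (C * Q)"
      using C Q by (simp add: assoc_mult_mat[of _ m m _ m _ p])
    then have "Q - C ^\<^sub>m Suc k * Q = (Q - C ^\<^sub>m k * Q) + C ^\<^sub>m k * (Q - C * Q)"
      using C Q by (intro eq_matI) (auto simp: mult_minus_distrib_mat[of _ m m])
    moreover have "nonneg_mat (C ^\<^sub>m k * (Q - C * Q))"
      using C Q dom nonneg_mat_pow[OF C \<open>nonneg_mat C\<close>] by (intro nonneg_mat_mult[of _ m m _ p]) auto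
    ultimately show ?case
      using Suc.IH C Q unfolding nonneg_mat_def by auto
  qed
  show ?thesis
    unfolding nonneg_mat_def
  proof (intro allI impI)
    fix i j assume "i < dim_row Q" "j < dim_col Q"
    then have i: "i < m" and j: "j < p" using Q by auto
    have "(\<lambda>k. (C ^\<^sub>m k * Q) $$ (i, j)) = (\<lambda>k. \<Sum>l<m. (C ^\<^sub>m k) $$ (i, l) * Q $$ (l, j))"
      using C Q i j by (auto simp: scalar_prod_def atLeast0LessThan)
    moreover have "(\<lambda>k. \<Sum>l<m. (C ^\<^sub>m k) $$ (i, l) * Q $$ (l, j)) \<longlonglongrightarrow> 0"
      using lim i by (intro tendsto_null_sum tendsto_mult_left_zero) auto
    ultimately have conv: "(\<lambda>k. Q $$ (i, j) - (C ^\<^sub>m k * Q) $$ (i, j)) \<longlonglongrightarrow> Q $$ (i, j) - 0"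
      by (intro tendsto_diff) auto
    have "0 \<le> Q $$ (i, j) - (C ^\<^sub>m k * Q) $$ (i, j)" for k
      using dec[of k] C Q i j unfolding nonneg_mat_def by auto
    then have "0 \<le> Q $$ (i, j) - 0"
      by (intro LIMSEQ_le_const[OF conv]) auto
    then show "0 \<le> Q $$ (i, j)" by simp
  qed
qed

section \<open>Metzler Hurwitz matrices and bordered inverses\<close>

lemma hurwitz_invertible:
  assumes A: "A \<in> carrier_mat m m" and "hurwitz A"
  obtains P where "P \<in> carrier_mat m m" "A * P = 1\<^sub>m m" "P * A = 1\<^sub>m m"
proof -
  let ?AC = "map_mat complex_of_real A"
  have "\<not> eigenvalue ?AC 0"
    using \<open>hurwitz A\<close> unfolding hurwitz_def by fastforce
  moreover have "char_matrix ?AC 0 = ?AC"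
    using A unfolding char_matrix_def by (intro eq_matI) auto
  ultimately have "det A \<noteq> 0"
    using eigenvalue_det[of ?AC m 0] A by simp
  then show ?thesis
    using det_non_zero_imp_unit[OF A, of undefined] that unfolding Units_def ring_mat_def by auto
qed

lemma eventually_cmod_add_less:
  assumes "Re z < 0"
  shows "\<forall>\<^sub>F c in at_top. cmod (z + complex_of_real c) < c"
  using eventually_gt_at_top[of "max 0 ((cmod z)\<^sup>2 / (- 2 * Re z))"]
proof eventually_elim
  case (elim c)
  then have "0 < c" and "(cmod z)\<^sup>2 / (- 2 * Re z) < c"
    by auto
  moreover have "0 < - 2 * Re z"
    using assms by simp
  ultimately have "(cmod z)\<^sup>2 < c * (- 2 * Re z)"
    by (metis pos_divide_less_eq)
  moreover have "(cmod (z + complex_of_real c))\<^sup>2 = (cmod z)\<^sup>2 + 2 * c * Re z + c\<^sup>2"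
    unfolding cmod_power2 by (simp add: power2_eq_square algebra_simps)
  ultimately have "(cmod (z + complex_of_real c))\<^sup>2 < c\<^sup>2"
    by linarith
  then show ?case
    using \<open>0 < c\<close> by (simp add: power_less_imp_less_base)
qed

lemma metzler_hurwitz_neg_inverse_nonneg:
  assumes A: "A \<in> carrier_mat m m" and "metzler A" and "hurwitz A"
  obtains Q where "Q \<in> carrier_mat m m" "A * Q = - 1\<^sub>m m" "Q * A = - 1\<^sub>m m" "nonneg_mat Q"
proof -
  let ?AC = "map_mat complex_of_real A"
  obtain P where P: "P \<in> carrier_mat m m" "A * P = 1\<^sub>m m" "P * A = 1\<^sub>m m"
    using hurwitz_invertible[OF A \<open>hurwitz A\<close>] .
  define Q where "Q = - P"
  have Q: "Q \<in> carrier_mat m m" "A * Q = - 1\<^sub>m m" "Q * A = - 1\<^sub>m m"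
    unfolding Q_def using P A by auto
  have hur: "Re z < 0" if "z \<in> spectrum ?AC" for z
    using \<open>hurwitz A\<close> that unfolding hurwitz_def spectrum_def by auto
  have "\<forall>\<^sub>F c in at_top. \<forall>z \<in> spectrum ?AC. cmod (z + complex_of_real c) < c"
    using card_finite_spectrum(1)[of ?AC m] A
    by (intro eventually_ball_finite ballI eventually_cmod_add_less hur) auto
  moreover have "\<forall>\<^sub>F c in at_top. \<forall>i \<in> {..<m}. - A $$ (i, i) \<le> c"
    by (intro eventually_ball_finite ballI eventually_ge_at_top) auto
  ultimately have "\<forall>\<^sub>F c in at_top. (\<forall>z \<in> spectrum ?AC. cmod (z + complex_of_real c) < c)
      \<and> (\<forall>i \<in> {..<m}. - A $$ (i, i) \<le> c) \<and> 0 < c"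
    by (intro eventually_conj eventually_gt_at_top)
  then obtain c where disc: "\<And>z. z \<in> spectrum ?AC \<Longrightarrow> cmod (z + complex_of_real c) < c"
    and diag: "\<And>i. i < m \<Longrightarrow> - A $$ (i, i) \<le> c" and "0 < c"
    unfolding eventually_at_top_linorder by auto
  define C where "C = (1 / c) \<cdot>\<^sub>m A + 1\<^sub>m m"
  have C: "C \<in> carrier_mat m m"
    unfolding C_def using A by simp
  have "nonneg_mat C"
    using A \<open>metzler A\<close> \<open>0 < c\<close> unfolding C_def nonneg_mat_def metzler_def
    by (auto simp: field_simps dest: diag)
  moreover have "(\<lambda>k. (C ^\<^sub>m k) $$ (i, j)) \<longlonglongrightarrow> 0" if "i < m" "j < m" for i j
  proof -
    let ?CC = "map_mat complex_of_real C"
    have CC: "?CC = complex_of_real (1 / c) \<cdot>\<^sub>m ?AC + 1 \<cdot>\<^sub>m 1\<^sub>m m"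
      unfolding C_def using A by (intro eq_matI) auto
    have "cmod \<mu> < 1" if "eigenvalue ?CC \<mu>" for \<mu>
    proof -
      have "complex_of_real c * (\<mu> - 1) \<in> spectrum ?AC"
        using that CC eigenvalue_smult_add_diag_iff[of ?AC m "complex_of_real (1 / c)"] A \<open>0 < c\<close>
        unfolding spectrum_def by (simp add: mult.commute)
      from disc[OF this] have "cmod (complex_of_real c * \<mu>) < c"
        by (simp add: algebra_simps)
      then show ?thesis
        using \<open>0 < c\<close> by (simp add: norm_mult)
    qed
    then have "(\<lambda>k. (?CC ^\<^sub>m k) $$ (i, j)) \<longlonglongrightarrow> 0"
      using C that by (intro pow_mat_tendsto_zero[of _ m]) auto
    moreover have "(?CC ^\<^sub>m k) $$ (i, j) = complex_of_real ((C ^\<^sub>m k) $$ (i, j))" for k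
      using C that by (simp add: of_real_hom.mat_hom_pow[OF C, symmetric])
    ultimately have "(\<lambda>k. complex_of_real ((C ^\<^sub>m k) $$ (i, j))) \<longlonglongrightarrow> complex_of_real 0"
      by simp
    then show ?thesis
      by (rule tendsto_of_real_iff[THEN iffD1])
  qed
  moreover have "nonneg_mat (Q - C * Q)"
  proof -
    have "C * Q = (1 / c) \<cdot>\<^sub>m (A * Q) + Q"
      unfolding C_def using A Q
      by (simp add: add_mult_distrib_mat[of _ m m] mult_smult_assoc_mat[of _ m m])
    then show ?thesis
      using Q \<open>0 < c\<close> unfolding nonneg_mat_def by auto
  qed
  ultimately have "nonneg_mat Q"
    using nonneg_mat_of_pow_tendsto_zero[OF C] Q(1) by blast
  with Q that show ?thesis by blast
qed

lemma bordered_inverse_border_nonneg: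
  fixes A Q b c d Y Z W :: "real mat"
  assumes A: "A \<in> carrier_mat m m" and Q: "Q \<in> carrier_mat m m"
    and AQ: "A * Q = - 1\<^sub>m m" and QA: "Q * A = - 1\<^sub>m m" and "nonneg_mat Q"
    and b: "b \<in> carrier_mat m 1" and c: "c \<in> carrier_mat 1 m" and d: "d \<in> carrier_mat 1 1"
    and "nonneg_mat b" "nonneg_mat c" "d $$ (0, 0) > 0"
    and Y: "Y \<in> carrier_mat m 1" and Z: "Z \<in> carrier_mat 1 m" and W: "W \<in> carrier_mat 1 1"
    and col: "A * Y + b * W = 0\<^sub>m m 1" and corner: "c * Y + d * W = 1\<^sub>m 1"
    and row: "Z * A + W * c = 0\<^sub>m 1 m"
  shows "nonneg_mat Y" "nonneg_mat Z" "W $$ (0, 0) > 0"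
proof -
  have Qb: "Q * b \<in> carrier_mat m 1" and Wc: "W * c \<in> carrier_mat 1 m"
    using Q b W c by simp_all
  have Y_eq: "Y = Q * b * W"
  proof -
    have "0\<^sub>m m 1 = Q * (A * Y + b * W)"
      using Q by (simp add: col)
    also have "\<dots> = Q * (A * Y) + Q * (b * W)"
      using A Y b W by (intro mult_add_distrib_mat[OF Q]) auto
    also have "\<dots> = Q * A * Y + Q * b * W"
      by (simp only: assoc_mult_mat[OF Q A Y] assoc_mult_mat[OF Q b W])
    also have "\<dots> = - Y + Q * b * W"
      using Y by (simp add: QA)
    finally show ?thesis
      using Qb W by (intro uminus_add_eq_zero_imp_eq[OF _ Y]) auto
  qed
  have Z_eq: "Z = W * c * Q"
  proof -
    have "0\<^sub>m 1 m = (Z * A + W * c) * Q"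
      using Q by (simp add: row)
    also have "\<dots> = Z * A * Q + W * c * Q"
      using A Z c W by (intro add_mult_distrib_mat[OF _ _ Q]) auto
    also have "\<dots> = Z * (A * Q) + W * c * Q"
      by (simp only: assoc_mult_mat[OF Z A Q])
    also have "\<dots> = - Z + W * c * Q"
      using Z by (simp add: AQ)
    finally show ?thesis
      using Wc Q by (intro uminus_add_eq_zero_imp_eq[OF _ Z]) auto
  qed
  have cQb: "c * (Q * b) \<in> carrier_mat 1 1" and "nonneg_mat (c * (Q * b))"
    using c Q b Qb \<open>nonneg_mat Q\<close> \<open>nonneg_mat b\<close> \<open>nonneg_mat c\<close>
    by (simp_all add: nonneg_mat_mult[of _ 1 m _ 1] nonneg_mat_mult[of _ m m _ 1])
  then have "(c * (Q * b)) $$ (0, 0) \<ge> 0"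
    using nonneg_mat_1x1_iff[OF cQb] by blast
  then have pos: "(c * (Q * b)) $$ (0, 0) + d $$ (0, 0) > 0"
    using \<open>d $$ (0, 0) > 0\<close> by linarith
  have "1 = (c * Y + d * W) $$ (0, 0)"
    by (simp add: corner)
  also have "\<dots> = (c * (Q * b) * W) $$ (0, 0) + (d * W) $$ (0, 0)"
    unfolding Y_eq assoc_mult_mat[OF c Qb W, symmetric] using c d W by simp
  also have "\<dots> = ((c * (Q * b)) $$ (0, 0) + d $$ (0, 0)) * W $$ (0, 0)"
    by (simp only: index_mult_1x1[OF cQb W] index_mult_1x1[OF d W] distrib_right)
  finally have "0 < ((c * (Q * b)) $$ (0, 0) + d $$ (0, 0)) * W $$ (0, 0)"
    by linarith
  then show "W $$ (0, 0) > 0"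
    using pos zero_less_mult_pos by blast
  then have "nonneg_mat W"
    using nonneg_mat_1x1_iff[OF W] by simp
  then show "nonneg_mat Y" "nonneg_mat Z"
    unfolding Y_eq Z_eq using \<open>nonneg_mat Q\<close> \<open>nonneg_mat b\<close> \<open>nonneg_mat c\<close>
    by (meson nonneg_mat_mult Q b c W Qb Wc)+
qed

section \<open>Bordering by \<open>S\<close> and \<open>e\<^sub>n\<close>\<close>

lemma S_mat_carrier: "S_mat n \<in> carrier_mat n (n - 1)"
  unfolding S_mat_def by simp

lemma en_col_carrier: "en_col n \<in> carrier_mat n 1"
  unfolding en_col_def by simp

lemma S_mat_transpose_mult_index:
  assumes "X \<in> carrier_mat n k" "i < n - 1" "j < k"
  shows "(transpose_mat (S_mat n) * X) $$ (i, j) = X $$ (i, j)"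
  using assms by (simp add: S_mat_def scalar_prod_def if_distrib if_distribR cong: if_cong)

lemma mult_S_mat_index:
  assumes "X \<in> carrier_mat k n" "i < k" "j < n - 1"
  shows "(X * S_mat n) $$ (i, j) = X $$ (i, j)"
  using assms by (simp add: S_mat_def scalar_prod_def if_distrib if_distribR cong: if_cong)

lemma en_col_transpose_mult_index:
  assumes "X \<in> carrier_mat n k" "0 < n" "j < k"
  shows "(transpose_mat (en_col n) * X) $$ (0, j) = X $$ (n - 1, j)"
  using assms by (simp add: en_col_def scalar_prod_def if_distrib if_distribR cong: if_cong)

lemma mult_en_col_index:
  assumes "X \<in> carrier_mat k n" "0 < n" "i < k"
  shows "(X * en_col n) $$ (i, 0) = X $$ (i, n - 1)"
  using assms by (simp add: en_col_def scalar_prod_def if_distrib if_distribR cong: if_cong)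

lemma S_mat_transpose_mult_en_col: "transpose_mat (S_mat (Suc m)) * en_col (Suc m) = 0\<^sub>m m 1"
  by (intro eq_matI) (auto simp: S_mat_def en_col_def scalar_prod_def)

lemma en_col_transpose_mult_S_mat: "transpose_mat (en_col (Suc m)) * S_mat (Suc m) = 0\<^sub>m 1 m"
  by (intro eq_matI) (auto simp: S_mat_def en_col_def scalar_prod_def)

lemma en_col_transpose_mult_en_col: "transpose_mat (en_col (Suc m)) * en_col (Suc m) = 1\<^sub>m 1"
  by (intro eq_matI) (auto simp: en_col_def scalar_prod_def if_distrib if_distribR cong: if_cong)

text \<open>Inserting \<open>I = S S\<^sup>T + e\<^sub>n e\<^sub>n\<^sup>T\<close> between two factors.\<close>

lemma mult_split_last:
  fixes U V :: "real mat" and m :: nat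
  defines "S \<equiv> S_mat (Suc m)" and "e \<equiv> en_col (Suc m)"
  assumes U: "U \<in> carrier_mat k (Suc m)" and V: "V \<in> carrier_mat (Suc m) l"
  shows "U * V = U * S * (transpose_mat S * V) + U * e * (transpose_mat e * V)"
proof -
  have S: "S \<in> carrier_mat (Suc m) m" and e: "e \<in> carrier_mat (Suc m) 1"
    unfolding S_def e_def using S_mat_carrier[of "Suc m"] en_col_carrier by auto
  have US: "U * S \<in> carrier_mat k m" and SV: "transpose_mat S * V \<in> carrier_mat m l"
    and Ue: "U * e \<in> carrier_mat k 1" and eV: "transpose_mat e * V \<in> carrier_mat 1 l"
    using U V S e by auto
  show ?thesis
  proof (rule eq_matI)
    fix i j assume "i < dim_row (U * S * (transpose_mat S * V) + U * e * (transpose_mat e * V))"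
      "j < dim_col (U * S * (transpose_mat S * V) + U * e * (transpose_mat e * V))"
    then have i: "i < k" and j: "j < l"
      using US SV by auto
    have "(U * V) $$ (i, j) = (\<Sum>p<m. U $$ (i, p) * V $$ (p, j)) + U $$ (i, m) * V $$ (m, j)"
      using index_mult_mat_sum[OF U V i j] by simp
    also have "(\<Sum>p<m. U $$ (i, p) * V $$ (p, j)) = (U * S * (transpose_mat S * V)) $$ (i, j)"
      unfolding index_mult_mat_sum[OF US SV i j] unfolding S_def
      using U V i j by (intro sum.cong) (simp_all add: mult_S_mat_index S_mat_transpose_mult_index)
    also have "U $$ (i, m) * V $$ (m, j) = (U * e * (transpose_mat e * V)) $$ (i, j)"
      unfolding index_mult_mat_sum[OF Ue eV i j] unfolding e_def
      using U V i j by (simp add: mult_en_col_index en_col_transpose_mult_index)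
    finally show "(U * V) $$ (i, j)
        = (U * S * (transpose_mat S * V) + U * e * (transpose_mat e * V)) $$ (i, j)"
      using US SV Ue eV i j by (subst index_add_mat) auto
  qed (use U V US SV in auto)
qed

lemma transpose_mult_split_last:
  fixes P R X N :: "real mat" and m :: nat
  defines "S \<equiv> S_mat (Suc m)" and "e \<equiv> en_col (Suc m)"
  assumes P: "P \<in> carrier_mat (Suc m) p" and R: "R \<in> carrier_mat (Suc m) r"
    and X: "X \<in> carrier_mat (Suc m) (Suc m)" and N: "N \<in> carrier_mat (Suc m) (Suc m)"
  shows "transpose_mat P * (X * N) * R
    = transpose_mat P * X * S * (transpose_mat S * N * R) + transpose_mat P * X * e * (transpose_mat e * N * R)"
proof -
  have S: "S \<in> carrier_mat (Suc m) m" and e: "e \<in> carrier_mat (Suc m) 1"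
    unfolding S_def e_def using S_mat_carrier[of "Suc m"] en_col_carrier by auto
  have PX: "transpose_mat P * X \<in> carrier_mat p (Suc m)" and NR: "N * R \<in> carrier_mat (Suc m) r"
    using P X N R by auto
  have "transpose_mat P * (X * N) * R = (transpose_mat P * X) * (N * R)"
    using P X N R
    by (simp add: assoc_mult_mat[of "transpose_mat P" p "Suc m" X "Suc m" "N * R" r]
        assoc_mult_mat[of "transpose_mat P" p "Suc m" "X * N" "Suc m" R r]
        assoc_mult_mat[of X "Suc m" "Suc m" N "Suc m" R r])
  also have "\<dots> = transpose_mat P * X * S * (transpose_mat S * (N * R))
      + transpose_mat P * X * e * (transpose_mat e * (N * R))"
    unfolding S_def e_def by (rule mult_split_last[OF PX NR])
  also have "\<dots> = transpose_mat P * X * S * (transpose_mat S * N * R)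
      + transpose_mat P * X * e * (transpose_mat e * N * R)"
    using S e N R
    by (simp add: assoc_mult_mat[of _ m "Suc m" _ "Suc m"] assoc_mult_mat[of _ 1 "Suc m" _ "Suc m"])
  finally show ?thesis .
qed

lemma inverse_block_equations:
  fixes M N :: "real mat" and m :: nat
  defines "S \<equiv> S_mat (Suc m)" and "e \<equiv> en_col (Suc m)"
  assumes M: "M \<in> carrier_mat (Suc m) (Suc m)" and N: "N \<in> carrier_mat (Suc m) (Suc m)"
    and MN: "M * N = 1\<^sub>m (Suc m)" and NM: "N * M = 1\<^sub>m (Suc m)"
  shows "transpose_mat S * M * S * (transpose_mat S * N * e)
      + transpose_mat S * M * e * (transpose_mat e * N * e) = 0\<^sub>m m 1" (is ?col)
    and "transpose_mat e * M * S * (transpose_mat S * N * e)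
      + transpose_mat e * M * e * (transpose_mat e * N * e) = 1\<^sub>m 1" (is ?corner)
    and "transpose_mat e * N * S * (transpose_mat S * M * S)
      + transpose_mat e * N * e * (transpose_mat e * M * S) = 0\<^sub>m 1 m" (is ?row)
proof -
  have S: "S \<in> carrier_mat (Suc m) m" and e: "e \<in> carrier_mat (Suc m) 1"
    unfolding S_def e_def using S_mat_carrier[of "Suc m"] en_col_carrier by auto
  note split = transpose_mult_split_last[folded S_def e_def]
  show ?col
    using split[OF S e M N] S e unfolding MN S_def e_def by (simp add: S_mat_transpose_mult_en_col)
  show ?corner
    using split[OF e e M N] e unfolding MN S_def e_def by (simp add: en_col_transpose_mult_en_col)
  show ?row
    using split[OF e S N M] S e unfolding NM S_def e_def by (simp add: en_col_transpose_mult_S_mat)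
qed

lemma S_mat_sandwich_index:
  assumes X: "X \<in> carrier_mat n n" and "i < n - 1" "j < n - 1"
  shows "(transpose_mat (S_mat n) * X * S_mat n) $$ (i, j) = X $$ (i, j)"
proof -
  have "(transpose_mat (S_mat n) * X * S_mat n) $$ (i, j) = (transpose_mat (S_mat n) * X) $$ (i, j)"
    using assms S_mat_carrier[of n] by (intro mult_S_mat_index[of _ "n - 1"]) auto
  also have "\<dots> = X $$ (i, j)"
    using assms by (intro S_mat_transpose_mult_index[OF X]) auto
  finally show ?thesis .
qed

lemma S_mat_en_col_sandwich_index:
  assumes X: "X \<in> carrier_mat n n" and "0 < n" "i < n - 1"
  shows "(transpose_mat (S_mat n) * X * en_col n) $$ (i, 0) = X $$ (i, n - 1)"
proof -
  have "(transpose_mat (S_mat n) * X * en_col n) $$ (i, 0) = (transpose_mat (S_mat n) * X) $$ (i, n - 1)"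
    using assms S_mat_carrier[of n] by (intro mult_en_col_index[of _ "n - 1"]) auto
  also have "\<dots> = X $$ (i, n - 1)"
    using assms by (intro S_mat_transpose_mult_index[OF X]) auto
  finally show ?thesis .
qed

lemma en_col_S_mat_sandwich_index:
  assumes X: "X \<in> carrier_mat n n" and "0 < n" "j < n - 1"
  shows "(transpose_mat (en_col n) * X * S_mat n) $$ (0, j) = X $$ (n - 1, j)"
proof -
  have "(transpose_mat (en_col n) * X * S_mat n) $$ (0, j) = (transpose_mat (en_col n) * X) $$ (0, j)"
    using assms en_col_carrier[of n] by (intro mult_S_mat_index[of _ 1]) auto
  also have "\<dots> = X $$ (n - 1, j)"
    using assms by (intro en_col_transpose_mult_index[OF X]) auto
  finally show ?thesis .
qed

lemma en_col_sandwich_index: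
  assumes X: "X \<in> carrier_mat n n" and "0 < n"
  shows "(transpose_mat (en_col n) * X * en_col n) $$ (0, 0) = X $$ (n - 1, n - 1)"
proof -
  have "(transpose_mat (en_col n) * X * en_col n) $$ (0, 0) = (transpose_mat (en_col n) * X) $$ (0, n - 1)"
    using assms en_col_carrier[of n] by (intro mult_en_col_index[of _ 1]) auto
  also have "\<dots> = X $$ (n - 1, n - 1)"
    using assms by (intro en_col_transpose_mult_index[OF X]) auto
  finally show ?thesis .
qed

lemma metzler_S_mat_sandwich:
  assumes "X \<in> carrier_mat n n" "metzler X"
  shows "metzler (transpose_mat (S_mat n) * X * S_mat n)"
  using assms S_mat_carrier[of n] S_mat_sandwich_index[of X n] unfolding metzler_def by auto

lemma metzler_border_nonneg:
  assumes "X \<in> carrier_mat n n" "metzler X" "0 < n"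
  shows "nonneg_mat (transpose_mat (S_mat n) * X * en_col n)"
    "nonneg_mat (transpose_mat (en_col n) * X * S_mat n)"
  using assms S_mat_carrier[of n] en_col_carrier[of n]
    S_mat_en_col_sandwich_index[of X n] en_col_S_mat_sandwich_index[of X n]
  unfolding metzler_def nonneg_mat_def by auto

lemma last_row_nonneg:
  assumes X: "X \<in> carrier_mat n n" and n: "0 < n" and j: "j < n"
    and border: "nonneg_mat (transpose_mat (en_col n) * X * S_mat n)"
    and corner: "(transpose_mat (en_col n) * X * en_col n) $$ (0, 0) \<ge> 0"
  shows "X $$ (n - 1, j) \<ge> 0"
proof (cases "j = n - 1")
  case True
  then show ?thesis using corner by (simp add: en_col_sandwich_index[OF X n])
next
  case False
  then have j': "j < n - 1" using j by linarith
  have "0 \<le> (transpose_mat (en_col n) * X * S_mat n) $$ (0, j)"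
    using X j' S_mat_carrier[of n] en_col_carrier[of n] by (intro nonneg_matD[OF border]) auto
  then show ?thesis by (simp only: en_col_S_mat_sandwich_index[OF X n j'])
qed

lemma unit_vec_scalar_prod_mult_vec_nonneg:
  fixes X :: "real mat"
  assumes X: "X \<in> carrier_mat n n" and k: "k < n" and row: "\<And>j. j < n \<Longrightarrow> X $$ (k, j) \<ge> 0"
    and v: "v \<in> carrier_vec n" and "\<And>i. i < n \<Longrightarrow> v $ i \<ge> 0"
  shows "unit_vec n k \<bullet> (X *\<^sub>v v) \<ge> 0"
proof -
  have "unit_vec n k \<bullet> (X *\<^sub>v v) = row X k \<bullet> v"
    using X k v by simp
  also have "\<dots> = (\<Sum>j<n. X $$ (k, j) * v $ j)"
    using X k v by (simp add: scalar_prod_def atLeast0LessThan)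
  also have "\<dots> \<ge> 0"
    using row assms(5) by (intro sum_nonneg mult_nonneg_nonneg) auto
  finally show ?thesis .
qed

theorem mainTheorem10:
  fixes n :: nat and M Minv :: "real mat"
  assumes "n \<ge> 2"
    and "M \<in> carrier_mat n n"
    and "metzler M"
    and "output_unstable M"
    and "det M \<noteq> 0"
    and "Minv \<in> carrier_mat n n"
    and "M * Minv = 1\<^sub>m n" and "Minv * M = 1\<^sub>m n"
  shows "nonneg_mat (transpose_mat (S_mat n) * Minv * en_col n)
       \<and> nonneg_mat (transpose_mat (en_col n) * Minv * S_mat n)
       \<and> (transpose_mat (en_col n) * Minv * en_col n) $$ (0, 0) > 0
       \<and> (\<forall>b0 \<in> carrier_vec n. (\<forall>i < n. b0 $ i \<ge> 0) \<longrightarrow>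
            - (unit_vec n (n - 1) \<bullet> (Minv *\<^sub>v b0)) \<le> (0::real))
       \<and> - ((transpose_mat (en_col n) * Minv * en_col n) $$ (0, 0)) < 0"
proof -
  obtain m where n: "n = Suc m"
    using assms(1) by (cases n) auto
  let ?S = "S_mat n" and ?e = "en_col n"
  let ?A = "transpose_mat ?S * M * ?S" and ?b = "transpose_mat ?S * M * ?e"
    and ?c = "transpose_mat ?e * M * ?S" and ?d = "transpose_mat ?e * M * ?e"
  let ?Y = "transpose_mat ?S * Minv * ?e" and ?Z = "transpose_mat ?e * Minv * ?S"
    and ?W = "transpose_mat ?e * Minv * ?e"
  have S: "?S \<in> carrier_mat n m" and e: "?e \<in> carrier_mat n 1"
    using S_mat_carrier[of n] en_col_carrier[of n] n by auto
  have "hurwitz ?A" and d_pos: "?d $$ (0, 0) > 0"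
    using assms(2,4) unfolding output_unstable_def by auto
  moreover have A: "?A \<in> carrier_mat m m"
    using S assms(2) by auto
  ultimately obtain Q
    where Q: "Q \<in> carrier_mat m m" "?A * Q = - 1\<^sub>m m" "Q * ?A = - 1\<^sub>m m" "nonneg_mat Q"
    using metzler_hurwitz_neg_inverse_nonneg metzler_S_mat_sandwich[OF assms(2,3)] by blast
  have blocks: "?b \<in> carrier_mat m 1" "?c \<in> carrier_mat 1 m" "?d \<in> carrier_mat 1 1"
    "?Y \<in> carrier_mat m 1" "?Z \<in> carrier_mat 1 m" "?W \<in> carrier_mat 1 1"
    using S e assms(2,6) by auto
  have "0 < n" using n by simp
  note border = metzler_border_nonneg[OF assms(2,3) this]
  note block_eqs = inverse_block_equations[OF assms(2,6,7,8)[unfolded n], folded n]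
  have Y: "nonneg_mat ?Y" and Z: "nonneg_mat ?Z" and W: "?W $$ (0, 0) > 0"
    using bordered_inverse_border_nonneg[OF A Q blocks(1-3) border d_pos blocks(4-6) block_eqs]
    by simp_all
  have "unit_vec n (n - 1) \<bullet> (Minv *\<^sub>v b0) \<ge> 0"
    if "b0 \<in> carrier_vec n" "\<forall>i < n. b0 $ i \<ge> 0" for b0
    using that n last_row_nonneg[OF assms(6) _ _ Z] W
    by (intro unit_vec_scalar_prod_mult_vec_nonneg[OF assms(6)]) auto
  with Y Z W show ?thesis by auto
qed

end
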